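(* Consider the robot rendezvous system $$\dot{x}_k(t)=x_{k-1}(t)-x_k(t),\quad k\in\mathbb{Z},\ t\ge0,$$ with initial constellation $x_0=(x_k(0))_{k\in\mathbb{Z}}\in\ell^\infty(\mathbb{Z})$. Then $x_0$ is good if and only if there exists $c\in\mathbb{C}$ such that $$\sup_{k\in\mathbb{Z}}\bigg|\frac{1}{n}\sum_{j=1}^n x_{k-j}(0)-c\bigg|\to0\quad\text{as } n\to\infty.$$ Moreover, if this holds, then $\sup_{k\in\mathbb{Z}}|x_k(t)-c|\to0$ as $t\to\infty$.
   Context: $\ell^\infty(\mathbb{Z})$ is the Banach space of bounded doubly infinite complex sequences with the supremum norm. $S$ denotes the right-shift operator on $\ell^\infty(\mathbb{Z})$, $S(x_k)=(x_{k-1})$. For $x_0\in\ell^\infty(\mathbb{Z})$, the solution of the system is $x(t)=(x_k(t))_{k\in\mathbb{Z}}=\exp(t(S-I))x_0$, $t\ge0$. An initial constellation $x_0\in\ell^\infty(\mathbb{Z})$ is called good if there exist constants $c_k\in\mathbb{C}$, $k\in\mathbb{Z}$, such that the corresponding solution satisfies $\sup_{k\in\mathbb{Z}}|x_k(t)-c_k|\to0$ as $t\to\infty$. *)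

theory Defs
  imports "HOL-Analysis.Analysis"
begin

text \<open>Elements of l-infinity(Z) are represented as functions int => complex that are
  bounded, i.e. bounded (range x).  The right shift S and the generator S - I.\<close>

definition rshift :: "(int \<Rightarrow> complex) \<Rightarrow> int \<Rightarrow> complex" where
  "rshift x = (\<lambda>k. x (k - 1))"

definition gen :: "(int \<Rightarrow> complex) \<Rightarrow> int \<Rightarrow> complex" where
  "gen x = (\<lambda>k. rshift x k - x k)"

text \<open>The solution x(t) = exp(t(S - I)) x0, written out as the exponential series
  sum_n t^n/n! (S - I)^n x0, evaluated coordinatewise (coordinate evaluation is
  continuous on l-infinity, so this equals the k-th coordinate of the norm-convergent
  operator series).\<close>

definition sol :: "(int \<Rightarrow> complex) \<Rightarrow> real \<Rightarrow> int \<Rightarrow> complex" where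
  "sol x0 t k = (\<Sum>n. complex_of_real (t ^ n / fact n) * (gen ^^ n) x0 k)"

definition good :: "(int \<Rightarrow> complex) \<Rightarrow> bool" where
  "good x0 \<longleftrightarrow> (\<exists>c :: int \<Rightarrow> complex. uniform_limit UNIV (sol x0) c at_top)"

end

theory Submission
  imports Defs "HOL-Real_Asymp.Real_Asymp"
begin

text \<open>The solution is a Poisson average of shifts of the initial constellation: expanding
  (S - I)^n binomially gives x(t) = e^{-t} e^{tS} x0, i.e. x_k(t) = sum_i p_t(i) x_{k-i}(0) with
  the Poisson weights p_t(i) = e^{-t} t^i / i!. These weights have total variation O(1 / sqrt t),
  so x(t) is almost shift invariant, uniformly in k: a uniform limit of x(t) must be constant, and
  x(t) differs from its Cesaro means of length N by O(N / sqrt t). Conversely the weights have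
  mean t, so the Cesaro mean of length N of x(t) differs from that of x0 by O(t / N). As Poisson
  averaging commutes with Cesaro means, the two estimates give both implications.\<close>

section \<open>Poisson weights\<close>

definition poisson_weight :: "real \<Rightarrow> nat \<Rightarrow> real" where
  "poisson_weight t i = exp (-t) * t ^ i / fact i"

lemma poisson_weight_nonneg: "t \<ge> 0 \<Longrightarrow> poisson_weight t i \<ge> 0"
  by (simp add: poisson_weight_def)

lemma poisson_weight_Suc: "poisson_weight t (Suc i) = t * poisson_weight t i / real (Suc i)"
  by (simp add: poisson_weight_def field_simps)

lemma poisson_weight_sums: "poisson_weight t sums 1"
proof -
  have "(\<lambda>i. t ^ i / fact i) sums exp t"
    using exp_converges[of t] by (simp add: divide_inverse mult.commute)
  from sums_mult[OF this, of "exp (-t)"] show ?thesis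
    by (simp add: poisson_weight_def[abs_def] exp_minus field_simps)
qed

lemma poisson_mean_sums: "(\<lambda>i. real i * poisson_weight t i) sums t"
proof -
  have "(\<lambda>i. real (Suc i) * poisson_weight t (Suc i)) sums (t * 1)"
    using sums_mult[OF poisson_weight_sums[of t], of t] by (simp add: poisson_weight_Suc)
  from sums_Suc[OF this] show ?thesis by simp
qed

lemma poisson_second_moment_sums: "(\<lambda>i. real i * real i * poisson_weight t i) sums (t\<^sup>2 + t)"
proof -
  define g where "g i = real i * (real i - 1) * poisson_weight t i" for i
  have "(\<lambda>i. g (Suc (Suc i))) sums (t\<^sup>2 * 1)"
    using sums_mult[OF poisson_weight_sums[of t], of "t\<^sup>2"]
    by (simp add: g_def poisson_weight_Suc power2_eq_square mult.assoc)
  then have "(\<lambda>i. g (Suc i)) sums (t\<^sup>2 * 1 + g (Suc 0))"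
    by (rule sums_Suc[where f = "\<lambda>i. g (Suc i)"])
  then have "g sums (t\<^sup>2 * 1 + g (Suc 0) + g 0)"
    by (rule sums_Suc)
  then have "(\<lambda>i. real i * (real i - 1) * poisson_weight t i) sums t\<^sup>2"
    by (simp add: g_def[abs_def])
  from sums_add[OF this poisson_mean_sums[of t]] show ?thesis
    by (simp add: algebra_simps)
qed

lemma poisson_variance_sums: "(\<lambda>i. (real i - t)\<^sup>2 * poisson_weight t i) sums t"
proof -
  have "(\<lambda>i. 2 * t * (real i * poisson_weight t i)) sums (2 * t * t)"
    by (rule sums_mult[OF poisson_mean_sums])
  from sums_add[OF sums_diff[OF poisson_second_moment_sums[of t] this]
      sums_mult[OF poisson_weight_sums[of t], of "t\<^sup>2"]]
  show ?thesis by (simp add: power2_eq_square algebra_simps)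
qed

lemma poisson_abs_deviation_le:
  assumes "t > 0"
  shows "summable (\<lambda>i. \<bar>real i - t\<bar> * poisson_weight t i)"
    and "(\<Sum>i. \<bar>real i - t\<bar> * poisson_weight t i) \<le> sqrt t"
proof -
  define s where "s = sqrt t"
  have s: "s > 0" "s * s = t" using assms by (auto simp: s_def)
  \<comment> \<open>AM-GM turns the variance into a bound for the mean absolute deviation.\<close>
  have am_gm: "\<bar>x\<bar> \<le> (x\<^sup>2 / s + s) / 2" for x :: real
  proof -
    have "0 \<le> (\<bar>x\<bar> - s)\<^sup>2" by simp
    then have "2 * s * \<bar>x\<bar> \<le> x\<^sup>2 + s * s" by (simp add: power2_eq_square algebra_simps)
    with s(1) show ?thesis by (simp add: field_simps power2_eq_square)
  qed
  have bound_sums: "(\<lambda>i. ((real i - t)\<^sup>2 * poisson_weight t i / s + s * poisson_weight t i) / 2)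
      sums ((t / s + s * 1) / 2)"
    by (intro sums_divide sums_add sums_mult poisson_variance_sums poisson_weight_sums)
  have le: "\<bar>real i - t\<bar> * poisson_weight t i
      \<le> ((real i - t)\<^sup>2 * poisson_weight t i / s + s * poisson_weight t i) / 2" for i
    using mult_right_mono[OF am_gm[of "real i - t"] poisson_weight_nonneg[of t i]] assms
    by (simp add: field_simps)
  show sm: "summable (\<lambda>i. \<bar>real i - t\<bar> * poisson_weight t i)"
    by (rule summable_comparison_test'[OF sums_summable[OF bound_sums], of 0])
      (use le poisson_weight_nonneg assms in auto)
  have "(\<Sum>i. \<bar>real i - t\<bar> * poisson_weight t i) \<le> (t / s + s * 1) / 2"
    using sums_le[OF le summable_sums[OF sm] bound_sums] .
  also have "\<dots> = sqrt t" using s by (simp add: s_def field_simps)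
  finally show "(\<Sum>i. \<bar>real i - t\<bar> * poisson_weight t i) \<le> sqrt t" .
qed

text \<open>The total variation of the weight sequence extended by \<open>0\<close> at index \<open>-1\<close>.\<close>

definition poisson_variation :: "real \<Rightarrow> real" where
  "poisson_variation t =
     poisson_weight t 0 + (\<Sum>i. \<bar>poisson_weight t (Suc i) - poisson_weight t i\<bar>)"

lemma poisson_variation_le:
  assumes t: "t > 0"
  shows "summable (\<lambda>i. \<bar>poisson_weight t (Suc i) - poisson_weight t i\<bar>)"
    and "poisson_variation t \<le> exp (-t) + 1 / sqrt t"
proof -
  define h where "h i = \<bar>real i - t\<bar> * poisson_weight t i" for i
  have hs: "summable h" and hl: "suminf h \<le> sqrt t"
    using poisson_abs_deviation_le[OF t] by (simp_all add: h_def[abs_def])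
  have diff_eq: "\<bar>poisson_weight t (Suc i) - poisson_weight t i\<bar> = h (Suc i) / t" for i
  proof -
    have "poisson_weight t i = poisson_weight t (Suc i) * real (Suc i) / t"
      using t by (simp add: poisson_weight_Suc)
    then have "poisson_weight t (Suc i) - poisson_weight t i
        = poisson_weight t (Suc i) * (t - real (Suc i)) / t"
      using t by (simp add: field_simps)
    then show ?thesis
      using t poisson_weight_nonneg[of t "Suc i"] by (simp add: h_def abs_mult abs_minus_commute)
  qed
  have "(\<lambda>i. h (Suc i)) sums (suminf h - h 0)"
    using sums_Suc_iff[of h "suminf h - h 0"] summable_sums[OF hs] by simp
  then have diffs: "(\<lambda>i. \<bar>poisson_weight t (Suc i) - poisson_weight t i\<bar>) sums ((suminf h - h 0) / t)"
    unfolding diff_eq by (rule sums_divide)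
  then show "summable (\<lambda>i. \<bar>poisson_weight t (Suc i) - poisson_weight t i\<bar>)"
    by (rule sums_summable)
  have "h 0 \<ge> 0" using t by (simp add: h_def poisson_weight_nonneg)
  then have "(suminf h - h 0) / t \<le> sqrt t / t" using hl t by (simp add: divide_right_mono)
  also have "sqrt t / t = 1 / sqrt t"
    using t by (simp add: field_simps real_div_sqrt)
  finally show "poisson_variation t \<le> exp (-t) + 1 / sqrt t"
    using diffs by (simp add: poisson_variation_def poisson_weight_def sums_iff)
qed

lemma poisson_variation_nonneg: "t > 0 \<Longrightarrow> poisson_variation t \<ge> 0"
  unfolding poisson_variation_def
  by (intro add_nonneg_nonneg suminf_nonneg poisson_variation_le poisson_weight_nonneg) auto

lemma poisson_variation_tendsto_0: "(poisson_variation \<longlongrightarrow> 0) at_top"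
proof (rule tendsto_sandwich)
  show "\<forall>\<^sub>F t in at_top. 0 \<le> poisson_variation t"
    "\<forall>\<^sub>F t in at_top. poisson_variation t \<le> exp (-t) + 1 / sqrt t"
    using poisson_variation_nonneg poisson_variation_le(2)
    by (auto intro: eventually_mono[OF eventually_gt_at_top[of 0]])
  show "((\<lambda>t. exp (-t) + 1 / sqrt t) \<longlongrightarrow> 0) at_top"
    by real_asymp
qed simp

section \<open>Poisson smoothing of a bounded sequence\<close>

definition poisson_smooth :: "real \<Rightarrow> (int \<Rightarrow> complex) \<Rightarrow> int \<Rightarrow> complex" where
  "poisson_smooth t y k = (\<Sum>i. of_real (poisson_weight t i) * y (k - int i))"

definition cesaro_mean :: "nat \<Rightarrow> (int \<Rightarrow> complex) \<Rightarrow> int \<Rightarrow> complex" where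
  "cesaro_mean n y k = (\<Sum>j = 1..n. y (k - int j)) / of_nat n"

lemma norm_cesaro_mean_sub_const_le:
  assumes N: "N \<ge> 1" and e: "\<And>m. norm (y m - c) \<le> e"
  shows "norm (cesaro_mean N y k - c) \<le> e"
proof -
  have "cesaro_mean N y k - c = (\<Sum>j = 1..N. y (k - int j) - c) / of_nat N"
    using N by (simp add: cesaro_mean_def sum_subtractf field_simps)
  then have "norm (cesaro_mean N y k - c) = norm (\<Sum>j = 1..N. y (k - int j) - c) / real N"
    by (simp add: norm_divide)
  also have "\<dots> \<le> (\<Sum>j = 1..N. e) / real N"
    by (intro divide_right_mono sum_norm_le e) simp
  finally show ?thesis
    using N by simp
qed

lemma poisson_smooth_sums:
  assumes t: "t \<ge> 0" and B: "\<And>m. norm (y m) \<le> B"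
  shows "(\<lambda>i. of_real (poisson_weight t i) * y (k - int i)) sums poisson_smooth t y k"
proof -
  have "summable (\<lambda>i. norm (of_real (poisson_weight t i) * y (k - int i)))"
  proof (rule summable_comparison_test'[of "\<lambda>i. poisson_weight t i * B" 0])
    show "summable (\<lambda>i. poisson_weight t i * B)"
      using sums_summable[OF sums_mult2[OF poisson_weight_sums]] .
    show "norm (norm (of_real (poisson_weight t i) * y (k - int i))) \<le> poisson_weight t i * B" for i
      using poisson_weight_nonneg[OF t, of i] B[of "k - int i"]
      by (simp add: norm_mult mult_left_mono)
  qed
  then show ?thesis
    unfolding poisson_smooth_def by (rule summable_sums[OF summable_norm_cancel])
qed

lemma poisson_weight_sums_const:
  fixes c :: complex
  shows "(\<lambda>i. of_real (poisson_weight t i) * c) sums c"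
proof -
  have "(\<lambda>i. of_real (poisson_weight t i)) sums (of_real 1 :: complex)"
    using poisson_weight_sums[of t] by (simp only: sums_of_real_iff)
  from sums_mult2[OF this, of c] show ?thesis by simp
qed

lemma norm_poisson_smooth_sub_const_le:
  assumes t: "t \<ge> 0" and e: "\<And>m. norm (y m - c) \<le> e"
  shows "norm (poisson_smooth t y k - c) \<le> e"
proof -
  have "norm (y m) \<le> e + norm c" for m
    using e[of m] norm_triangle_ineq2[of "y m" c] by linarith
  from sums_diff[OF poisson_smooth_sums[OF t this] poisson_weight_sums_const]
  have "(\<lambda>i. of_real (poisson_weight t i) * (y (k - int i) - c)) sums (poisson_smooth t y k - c)"
    by (simp add: algebra_simps)
  then show ?thesis
  proof (rule norm_sums_le)
    show "(\<lambda>i. poisson_weight t i * e) sums e"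
      using sums_mult2[OF poisson_weight_sums[of t], of e] by simp
    show "norm (of_real (poisson_weight t i) * (y (k - int i) - c)) \<le> poisson_weight t i * e" for i
      using poisson_weight_nonneg[OF t, of i] e[of "k - int i"]
      by (simp add: norm_mult mult_left_mono)
  qed
qed

lemma norm_poisson_smooth_shift_le:
  assumes t: "t > 0" and B: "\<And>m. norm (y m) \<le> B"
  shows "norm (poisson_smooth t y k - poisson_smooth t y (k - 1)) \<le> B * poisson_variation t"
proof -
  define w where "w = poisson_weight t"
  define a where "a i = of_real (w i) * y (k - int i)" for i
  define b where "b i = of_real (w i) * y (k - 1 - int i)" for i
  have "a sums poisson_smooth t y k" "b sums poisson_smooth t y (k - 1)"
    unfolding a_def b_def w_def by (intro poisson_smooth_sums[OF less_imp_le[OF t] B])+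
  then have "(\<lambda>i. a (Suc i) - b i) sums (poisson_smooth t y k - a 0 - poisson_smooth t y (k - 1))"
    by (intro sums_diff) (simp_all add: sums_Suc_iff)
  then have "(\<lambda>i. of_real (w (Suc i) - w i) * y (k - 1 - int i))
      sums (poisson_smooth t y k - a 0 - poisson_smooth t y (k - 1))"
    by (simp add: a_def b_def algebra_simps)
  then have "norm (poisson_smooth t y k - a 0 - poisson_smooth t y (k - 1))
      \<le> (\<Sum>i. \<bar>w (Suc i) - w i\<bar>) * B"
  proof (rule norm_sums_le)
    show "(\<lambda>i. \<bar>w (Suc i) - w i\<bar> * B) sums ((\<Sum>i. \<bar>w (Suc i) - w i\<bar>) * B)"
      using poisson_variation_le(1)[OF t] by (intro sums_mult2 summable_sums) (simp add: w_def)
    show "norm (of_real (w (Suc i) - w i) * y (k - 1 - int i)) \<le> \<bar>w (Suc i) - w i\<bar> * B" for i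
      unfolding norm_mult norm_of_real using B[of "k - 1 - int i"] by (simp add: mult_left_mono)
  qed
  moreover have "norm (a 0) \<le> w 0 * B"
    using B[of k] poisson_weight_nonneg[of t 0] t by (simp add: a_def w_def norm_mult mult_left_mono)
  ultimately show ?thesis
    using norm_triangle_ineq[of "a 0" "poisson_smooth t y k - a 0 - poisson_smooth t y (k - 1)"]
    by (simp add: poisson_variation_def w_def algebra_simps)
qed

lemma norm_poisson_smooth_shift_mult_le:
  assumes t: "t > 0" and B: "\<And>m. norm (y m) \<le> B"
  shows "norm (poisson_smooth t y k - poisson_smooth t y (k - int j)) \<le> real j * (B * poisson_variation t)"
proof (induction j)
  case (Suc j)
  have "norm (poisson_smooth t y k - poisson_smooth t y (k - int (Suc j)))
      \<le> norm (poisson_smooth t y k - poisson_smooth t y (k - int j))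
        + norm (poisson_smooth t y (k - int j) - poisson_smooth t y (k - int j - 1))"
    using norm_triangle_ineq[of "poisson_smooth t y k - poisson_smooth t y (k - int j)"
        "poisson_smooth t y (k - int j) - poisson_smooth t y (k - int j - 1)"]
    by (simp add: algebra_simps)
  also have "\<dots> \<le> real j * (B * poisson_variation t) + B * poisson_variation t"
    using Suc norm_poisson_smooth_shift_le[where y = y and k = "k - int j", OF t B] by linarith
  finally show ?case by (simp add: algebra_simps)
qed simp

lemma poisson_smooth_cesaro_mean:
  assumes t: "t \<ge> 0" and B: "\<And>m. norm (y m) \<le> B"
  shows "cesaro_mean n (poisson_smooth t y) k = poisson_smooth t (cesaro_mean n y) k"
proof -
  have "(\<lambda>i. \<Sum>j = 1..n. of_real (poisson_weight t i) * y (k - int j - int i))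
      sums (\<Sum>j = 1..n. poisson_smooth t y (k - int j))"
    by (intro sums_sum poisson_smooth_sums[OF t B])
  from sums_divide[OF this, of "of_nat n"]
  have "(\<lambda>i. of_real (poisson_weight t i) * cesaro_mean n y (k - int i))
      sums cesaro_mean n (poisson_smooth t y) k"
    by (simp add: cesaro_mean_def sum_distrib_left algebra_simps)
  then show ?thesis unfolding poisson_smooth_def by (simp add: sums_iff)
qed

lemma norm_poisson_smooth_sub_le:
  assumes t: "t > 0" and B: "\<And>m. norm (y m) \<le> B" and N: "N \<ge> 1"
    and e: "\<And>m. norm (cesaro_mean N y m - c) \<le> e"
  shows "norm (poisson_smooth t y k - c) \<le> e + real N * (B * poisson_variation t)"
proof -
  let ?P = "poisson_smooth t y"
  have "B * poisson_variation t \<ge> 0"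
    using order_trans[OF norm_ge_zero B] poisson_variation_nonneg[OF t] by simp
  then have "norm (?P k - ?P (k - int j)) \<le> real N * (B * poisson_variation t)" if "j \<in> {1..N}" for j
    using norm_poisson_smooth_shift_mult_le[where y = y and k = k and j = j, OF t B] that
    by (meson atLeastAtMost_iff mult_right_mono of_nat_mono order_trans)
  then have "norm (\<Sum>j = 1..N. ?P k - ?P (k - int j)) \<le> (\<Sum>j = 1..N. real N * (B * poisson_variation t))"
    by (intro sum_norm_le)
  then have "norm (?P k - cesaro_mean N ?P k) \<le> real N * (B * poisson_variation t)"
    using N by (simp add: cesaro_mean_def sum_subtractf norm_divide field_simps)
  moreover have "norm (cesaro_mean N ?P k - c) \<le> e"
    using t by (simp add: poisson_smooth_cesaro_mean[OF _ B] norm_poisson_smooth_sub_const_le e)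
  ultimately show ?thesis
    by (subst add.commute) (rule norm_diff_triangle_le)
qed

lemma sum_shift_diff_telescope:
  fixes y :: "int \<Rightarrow> 'a::ab_group_add"
  shows "(\<Sum>j = 1..N. y (k - int j) - y (k - int j - int i))
    = (\<Sum>l<i. y (k - 1 - int l) - y (k - int N - 1 - int l))"
proof (induction N)
  case (Suc N)
  have "(\<Sum>j = 1..Suc N. y (k - int j) - y (k - int j - int i))
      = (\<Sum>l<i. y (k - 1 - int l) - y (k - int N - 1 - int l))
        + (y (k - int N - 1) - y (k - int N - 1 - int i))"
    using Suc by (simp add: algebra_simps)
  also have "y (k - int N - 1) - y (k - int N - 1 - int i)
      = (\<Sum>l<i. y (k - int N - 1 - int l) - y (k - int N - 1 - int (Suc l)))"
    using sum_lessThan_telescope'[of "\<lambda>l. y (k - int N - 1 - int l)" i] by simp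
  finally show ?case
    by (simp add: sum.distrib[symmetric] algebra_simps)
qed simp

lemma norm_sum_shift_diff_le:
  fixes y :: "int \<Rightarrow> 'a::real_normed_vector"
  assumes B: "\<And>m. norm (y m) \<le> B"
  shows "norm (\<Sum>j = 1..N. y (k - int j) - y (k - int j - int i)) \<le> 2 * real i * B"
proof -
  have "norm (y (k - 1 - int l) - y (k - int N - 1 - int l)) \<le> 2 * B" for l
    using norm_triangle_ineq4[of "y (k - 1 - int l)" "y (k - int N - 1 - int l)"]
      B[of "k - 1 - int l"] B[of "k - int N - 1 - int l"] by linarith
  then have "norm (\<Sum>l<i. y (k - 1 - int l) - y (k - int N - 1 - int l)) \<le> (\<Sum>l<i. 2 * B)"
    by (intro sum_norm_le)
  then show ?thesis unfolding sum_shift_diff_telescope by simp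
qed

lemma norm_cesaro_mean_sub_le:
  assumes t: "t \<ge> 0" and B: "\<And>m. norm (y m) \<le> B" and N: "N \<ge> 1"
    and e: "\<And>m. norm (poisson_smooth t y m - c) \<le> e"
  shows "norm (cesaro_mean N y k - c) \<le> e + 2 * B * t / real N"
proof -
  let ?P = "poisson_smooth t y"
  have "(\<lambda>i. of_real (poisson_weight t i) * (y m - y (m - int i))) sums (y m - ?P m)" for m
    using sums_diff[OF poisson_weight_sums_const poisson_smooth_sums[OF t B]]
    by (simp add: algebra_simps)
  then have "(\<lambda>i. of_real (poisson_weight t i) * (\<Sum>j = 1..N. y (k - int j) - y (k - int j - int i)))
      sums (\<Sum>j = 1..N. y (k - int j) - ?P (k - int j))"
    by (simp add: sum_distrib_left sums_sum)
  then have "norm (\<Sum>j = 1..N. y (k - int j) - ?P (k - int j)) \<le> 2 * B * t"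
  proof (rule norm_sums_le)
    show "(\<lambda>i. 2 * B * (real i * poisson_weight t i)) sums (2 * B * t)"
      by (rule sums_mult[OF poisson_mean_sums])
    show "norm (of_real (poisson_weight t i) * (\<Sum>j = 1..N. y (k - int j) - y (k - int j - int i)))
        \<le> 2 * B * (real i * poisson_weight t i)" for i
      using mult_left_mono[OF norm_sum_shift_diff_le[where y = y and N = N and k = k and i = i, OF B]
          poisson_weight_nonneg[OF t, of i]]
      by (simp add: norm_mult abs_of_nonneg[OF poisson_weight_nonneg[OF t]] algebra_simps)
  qed
  moreover have "cesaro_mean N y k - cesaro_mean N ?P k
      = (\<Sum>j = 1..N. y (k - int j) - ?P (k - int j)) / of_nat N"
    by (simp add: cesaro_mean_def sum_subtractf diff_divide_distrib)
  ultimately have "norm (cesaro_mean N y k - cesaro_mean N ?P k) \<le> 2 * B * t / real N"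
    by (simp add: norm_divide divide_right_mono)
  moreover have "norm (cesaro_mean N ?P k - c) \<le> e"
    by (rule norm_cesaro_mean_sub_const_le[OF N e])
  ultimately show ?thesis
    by (subst add.commute) (rule norm_diff_triangle_le)
qed

section \<open>The solution as a Poisson smoothing\<close>

lemma signed_binomial_Suc_Suc:
  "(of_nat (Suc n choose Suc i) * (-1) ^ (Suc n - Suc i) :: 'a::comm_ring_1)
    = of_nat (n choose i) * (-1) ^ (n - i) - of_nat (n choose Suc i) * (-1) ^ (n - Suc i)"
proof (cases "i < n")
  case True
  then have "n - i = Suc (n - Suc i)" by simp
  with True show ?thesis by (simp add: algebra_simps)
next
  case False
  then show ?thesis by (simp add: binomial_eq_0)
qed

lemma gen_power_eq:
  "(gen ^^ n) y k = (\<Sum>i\<le>n. of_nat (n choose i) * (-1) ^ (n - i) * y (k - int i))"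
proof -
  define c :: "nat \<Rightarrow> nat \<Rightarrow> complex" where "c n i = of_nat (n choose i) * (-1) ^ (n - i)" for n i
  have c_Suc_Suc: "c (Suc n) (Suc i) = c n i - c n (Suc i)" for n i
    unfolding c_def by (rule signed_binomial_Suc_Suc)
  have "(gen ^^ n) y k = (\<Sum>i\<le>n. c n i * y (k - int i))" for k
  proof (induction n arbitrary: k)
    case 0
    then show ?case by (simp add: c_def)
  next
    case (Suc n)
    have "(\<Sum>i\<le>n. c n i * y (k - int i)) = (\<Sum>i\<le>Suc n. c n i * y (k - int i))"
      by (simp add: c_def)
    also have "\<dots> = c n 0 * y k + (\<Sum>i\<le>n. c n (Suc i) * y (k - 1 - int i))"
      by (subst sum.atMost_Suc_shift) (simp add: algebra_simps)
    finally have shifted: "(\<Sum>i\<le>n. c n i * y (k - int i))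
        = c n 0 * y k + (\<Sum>i\<le>n. c n (Suc i) * y (k - 1 - int i))" .
    have "(gen ^^ Suc n) y k = (gen ^^ n) y (k - 1) - (gen ^^ n) y k"
      by (simp add: gen_def rshift_def)
    also have "\<dots> = c (Suc n) 0 * y k + (\<Sum>i\<le>n. c (Suc n) (Suc i) * y (k - int (Suc i)))"
      unfolding Suc shifted
      by (simp add: c_Suc_Suc sum_subtractf algebra_simps) (simp add: c_def)
    also have "\<dots> = (\<Sum>i\<le>Suc n. c (Suc n) i * y (k - int i))"
      by (subst sum.atMost_Suc_shift) simp
    finally show ?case .
  qed
  then show ?thesis by (simp add: c_def)
qed

lemma exp_series_cauchy_product_coeff:
  fixes t :: real
  assumes "i \<le> n"
  shows "t ^ i / fact i * ((-t) ^ (n - i) / fact (n - i))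
    = t ^ n / fact n * (of_nat (n choose i) * (-1) ^ (n - i))"
proof -
  have "t ^ i * t ^ (n - i) = t ^ n"
    using assms by (simp flip: power_add)
  then have "t ^ i * (-t) ^ (n - i) = (-1) ^ (n - i) * t ^ n"
    by (subst power_minus) (simp add: algebra_simps)
  moreover have "(of_nat (n choose i) :: real) = fact n / (fact i * fact (n - i))"
    using binomial_fact[OF assms] by simp
  ultimately show ?thesis by (simp add: field_simps)
qed

lemma sol_eq_poisson_smooth:
  assumes t: "t \<ge> 0" and B: "\<And>m. norm (y m) \<le> B"
  shows "sol y t k = poisson_smooth t y k"
proof -
  define a where "a i = of_real (t ^ i / fact i) * y (k - int i)" for i
  define b :: "nat \<Rightarrow> complex" where "b i = of_real ((-t) ^ i / fact i)" for i
  have exp_sums: "(\<lambda>n. x ^ n / fact n) sums exp x" for x :: real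
    using exp_converges[of x] by (simp add: divide_inverse mult.commute)
  have a_summable: "summable (\<lambda>i. norm (a i))"
  proof (rule summable_comparison_test'[of "\<lambda>i. t ^ i / fact i * B" 0])
    show "summable (\<lambda>i. t ^ i / fact i * B)"
      using sums_summable[OF sums_mult2[OF exp_sums[of t]]] .
    show "norm (norm (a i)) \<le> t ^ i / fact i * B" for i
    proof -
      have "norm (a i) = t ^ i / fact i * norm (y (k - int i))"
        unfolding a_def norm_mult norm_of_real using t by simp
      then show ?thesis
        using B[of "k - int i"] t by (auto intro!: divide_right_mono mult_left_mono)
    qed
  qed
  moreover have "summable (\<lambda>i. norm (b i))"
    unfolding b_def norm_of_real using sums_summable[OF exp_sums[of t]] t by (simp add: power_abs)
  ultimately have "(\<lambda>n. \<Sum>i\<le>n. a i * b (n - i)) sums ((\<Sum>i. a i) * (\<Sum>i. b i))"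
    by (rule Cauchy_product_sums)
  moreover have "(\<Sum>i\<le>n. a i * b (n - i)) = of_real (t ^ n / fact n) * (gen ^^ n) y k" for n
  proof -
    have "a i * b (n - i) = of_real (t ^ n / fact n) * (of_nat (n choose i) * (-1) ^ (n - i) * y (k - int i))"
      if "i \<le> n" for i
    proof -
      have "a i * b (n - i) = of_real (t ^ i / fact i * ((-t) ^ (n - i) / fact (n - i))) * y (k - int i)"
        unfolding a_def b_def of_real_mult by (simp only: ac_simps)
      also have "\<dots> = of_real (t ^ n / fact n * (of_nat (n choose i) * (-1) ^ (n - i))) * y (k - int i)"
        by (simp only: exp_series_cauchy_product_coeff[OF that])
      finally show ?thesis
        by (simp only: of_real_mult of_real_of_nat_eq of_real_power of_real_minus of_real_1 ac_simps)
    qed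
    then show ?thesis
      by (simp add: gen_power_eq sum_distrib_left)
  qed
  moreover have "b sums of_real (exp (-t))"
    using exp_sums[of "-t"] unfolding b_def by (simp only: sums_of_real_iff)
  ultimately have "sol y t k = (\<Sum>i. a i) * of_real (exp (-t))"
    unfolding sol_def by (simp add: sums_iff)
  also have "\<dots> = (\<Sum>i. a i * of_real (exp (-t)))"
    by (rule suminf_mult2[OF summable_norm_cancel[OF a_summable]])
  also have "\<dots> = poisson_smooth t y k"
    by (simp add: poisson_smooth_def a_def poisson_weight_def algebra_simps)
  finally show ?thesis .
qed

lemma uniform_limit_sol_iff_poisson_smooth:
  assumes "bounded (range y)"
  shows "uniform_limit UNIV (sol y) f at_top
    \<longleftrightarrow> uniform_limit UNIV (\<lambda>t. poisson_smooth t y) f at_top"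
proof -
  obtain B where B: "\<And>m. norm (y m) \<le> B"
    using assms by (auto simp: bounded_iff)
  show ?thesis
    by (intro uniform_limit_cong eventually_mono[OF eventually_ge_at_top[of 0]])
      (simp_all add: sol_eq_poisson_smooth[where y = y, OF _ B])
qed

section \<open>Convergence of the solution and of the Cesaro means\<close>

lemma uniform_limit_poisson_smooth_if_cesaro:
  assumes bdd: "bounded (range y)"
    and lim: "uniform_limit UNIV (\<lambda>n. cesaro_mean n y) (\<lambda>_. c) sequentially"
  shows "uniform_limit UNIV (\<lambda>t. poisson_smooth t y) (\<lambda>_. c) at_top"
proof (rule uniform_limitI)
  fix e :: real
  assume e: "e > 0"
  obtain B where B: "\<And>m. norm (y m) \<le> B"
    using bdd by (auto simp: bounded_iff)
  have "\<forall>\<^sub>F n in sequentially. n \<ge> 1 \<and> (\<forall>m\<in>UNIV. dist (cesaro_mean n y m) c < e / 2)"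
    using e by (intro eventually_conj eventually_ge_at_top uniform_limitD[OF lim]) simp
  then obtain N where N: "N \<ge> 1" and close: "\<And>m. dist (cesaro_mean N y m) c < e / 2"
    using eventually_happens'[OF sequentially_bot] by blast
  have "((\<lambda>t. real N * (B * poisson_variation t)) \<longlongrightarrow> 0) at_top"
    by (intro tendsto_mult_right_zero poisson_variation_tendsto_0)
  from order_tendstoD(2)[OF this, of "e / 2"] e
  have "\<forall>\<^sub>F t in at_top. real N * (B * poisson_variation t) < e / 2"
    by simp
  then show "\<forall>\<^sub>F t in at_top. \<forall>k\<in>UNIV. dist (poisson_smooth t y k) c < e"
    using eventually_gt_at_top[of 0]
  proof eventually_elim
    case (elim t)
    have "norm (poisson_smooth t y k - c) < e" for k
      using norm_poisson_smooth_sub_le[OF elim(2) B N less_imp_le[OF close[unfolded dist_norm]], of k]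
        elim(1)
      by linarith
    then show ?case by (simp add: dist_norm)
  qed
qed

lemma poisson_smooth_shift_tendsto_0:
  assumes B: "\<And>m. norm (y m) \<le> B"
  shows "((\<lambda>t. poisson_smooth t y k - poisson_smooth t y (k - 1)) \<longlongrightarrow> 0) at_top"
proof (rule Lim_null_comparison)
  show "\<forall>\<^sub>F t in at_top. norm (poisson_smooth t y k - poisson_smooth t y (k - 1))
      \<le> B * poisson_variation t"
    using eventually_gt_at_top[of 0] by eventually_elim (rule norm_poisson_smooth_shift_le[OF _ B])
  show "((\<lambda>t. B * poisson_variation t) \<longlongrightarrow> 0) at_top"
    by (intro tendsto_mult_right_zero poisson_variation_tendsto_0)
qed

lemma uniform_limit_poisson_smooth_const:
  assumes bdd: "bounded (range y)"
    and lim: "uniform_limit UNIV (\<lambda>t. poisson_smooth t y) f at_top"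
  shows "\<exists>c. f = (\<lambda>_. c)"
proof -
  obtain B where B: "\<And>m. norm (y m) \<le> B"
    using bdd by (auto simp: bounded_iff)
  have shift: "f k = f (k - 1)" for k
  proof -
    have "((\<lambda>t. poisson_smooth t y k - poisson_smooth t y (k - 1)) \<longlongrightarrow> f k - f (k - 1)) at_top"
      by (intro tendsto_diff tendsto_uniform_limitI[OF lim]) simp_all
    from tendsto_unique[OF _ this poisson_smooth_shift_tendsto_0[where y = y, OF B]] show ?thesis
      by simp
  qed
  have "f k = f 0" for k
  proof (induction k rule: int_induct[where k = 0])
    case (step1 i)
    then show ?case using shift[of "i + 1"] by simp
  next
    case (step2 i)
    then show ?case using shift[of i] by simp
  qed simp
  then show ?thesis by auto
qed

lemma uniform_limit_cesaro_if_poisson_smooth: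
  assumes bdd: "bounded (range y)"
    and lim: "uniform_limit UNIV (\<lambda>t. poisson_smooth t y) (\<lambda>_. c) at_top"
  shows "uniform_limit UNIV (\<lambda>n. cesaro_mean n y) (\<lambda>_. c) sequentially"
proof (rule uniform_limitI)
  fix e :: real
  assume e: "e > 0"
  obtain B where B: "\<And>m. norm (y m) \<le> B"
    using bdd by (auto simp: bounded_iff)
  have "\<forall>\<^sub>F t in at_top. t > 0 \<and> (\<forall>m\<in>UNIV. dist (poisson_smooth t y m) c < e / 2)"
    using e by (intro eventually_conj eventually_gt_at_top uniform_limitD[OF lim]) simp
  then obtain t :: real where t: "t > 0" and close: "\<And>m. dist (poisson_smooth t y m) c < e / 2"
    using eventually_happens'[OF trivial_limit_at_top_linorder] by blast
  have "(\<lambda>n. 2 * B * t / of_nat n) \<longlonglongrightarrow> 0"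
    by (rule lim_const_over_n)
  from order_tendstoD(2)[OF this, of "e / 2"] e
  have "\<forall>\<^sub>F n in sequentially. 2 * B * t / real n < e / 2"
    by simp
  then show "\<forall>\<^sub>F n in sequentially. \<forall>k\<in>UNIV. dist (cesaro_mean n y k) c < e"
    using eventually_ge_at_top[of 1]
  proof eventually_elim
    case (elim n)
    have "norm (cesaro_mean n y k - c) < e" for k
      using norm_cesaro_mean_sub_le[OF less_imp_le[OF t] B elim(2)
          less_imp_le[OF close[unfolded dist_norm]], of k] elim(1)
      by linarith
    then show ?case by (simp add: dist_norm)
  qed
qed

theorem theorem1:
  fixes x0 :: "int \<Rightarrow> complex"
  assumes "bounded (range x0)"
  shows "(good x0 \<longleftrightarrow>
           (\<exists>c :: complex. uniform_limit UNIV
              (\<lambda>n k. (\<Sum>j = 1..n. x0 (k - int j)) / of_nat n) (\<lambda>_. c) sequentially))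
       \<and> (\<forall>c :: complex. uniform_limit UNIV
              (\<lambda>n k. (\<Sum>j = 1..n. x0 (k - int j)) / of_nat n) (\<lambda>_. c) sequentially
            \<longrightarrow> uniform_limit UNIV (sol x0) (\<lambda>_. c) at_top)"
proof -
  have mean: "(\<lambda>n k. (\<Sum>j = 1..n. x0 (k - int j)) / of_nat n) = (\<lambda>n. cesaro_mean n x0)"
    by (simp add: fun_eq_iff cesaro_mean_def)
  have "good x0 \<longleftrightarrow> (\<exists>c. uniform_limit UNIV (\<lambda>t. poisson_smooth t x0) (\<lambda>_. c) at_top)"
    unfolding good_def uniform_limit_sol_iff_poisson_smooth[OF assms]
    using uniform_limit_poisson_smooth_const[OF assms] by blast
  then show ?thesis
    unfolding mean uniform_limit_sol_iff_poisson_smooth[OF assms]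
    using uniform_limit_cesaro_if_poisson_smooth[OF assms]
      uniform_limit_poisson_smooth_if_cesaro[OF assms]
    by blast
qed

end
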